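(* Let $\mathcal{W}$ be a set and let $(d_\epsilon)_{\epsilon\ge0}$ be a family of functions $d_\epsilon:\mathcal{W}\times\mathcal{W}\to\mathbb{R}$ such that for each fixed $x,y\in\mathcal{W}$ the map $\epsilon\mapsto d_\epsilon(x,y)$ is right continuous and weakly decreasing, and each $d_\epsilon$ is symmetric and satisfies the triangle inequality. For $k>0$ define $d^k(x,y)=\inf\{\epsilon\ge0:d_\epsilon(x,y)\le k\epsilon\}$. If $y,\tilde y\in\mathcal{W}$ and there exists $\delta>0$ with $d_\delta(y,\tilde y)=0$, then for every $x\in\mathcal{W}$, \[ |d^k(x,y)-d^k(x,\tilde y)|\le\delta. \] *)

theory Defs
  imports Complex_Main
begin

text \<open>The family (d_eps)_{eps >= 0} is modelled as d :: real => 'a => 'a => real,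
  only used at eps >= 0. d^k(x,y) = inf {eps >= 0. d_eps(x,y) <= k eps}.\<close>

definition dk :: "(real \<Rightarrow> 'a \<Rightarrow> 'a \<Rightarrow> real) \<Rightarrow> real \<Rightarrow> 'a \<Rightarrow> 'a \<Rightarrow> real" where
  "dk d k x y = Inf {e. 0 \<le> e \<and> d e x y \<le> k * e}"

end

theory Submission
  imports Defs
begin

text \<open>If \<open>d e x y \<le> k e\<close>, then monotonicity in \<open>e\<close> and the triangle inequality give
  \<open>d (e + \<delta>) x y' \<le> d e x y + d \<delta> y y' \<le> k e \<le> k (e + \<delta>)\<close>. So shifting by \<open>\<delta>\<close> maps
  the set whose infimum is \<open>dk d k x y\<close> into the one for \<open>dk d k x y'\<close>, and symmetrically.\<close>

lemma cInf_le_cInf_add: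
  fixes S T :: "'a :: {conditionally_complete_linorder, ordered_ab_group_add} set"
  assumes "S \<noteq> {}" and "bdd_below T" and "\<And>s. s \<in> S \<Longrightarrow> s + c \<in> T"
  shows "Inf T \<le> Inf S + c"
proof -
  have "Inf T - c \<le> s" if "s \<in> S" for s
    using cInf_lower[OF assms(3)[OF that] assms(2)] by (simp add: diff_le_eq)
  then have "Inf T - c \<le> Inf S"
    using assms(1) by (intro cInf_greatest) auto
  then show ?thesis
    by (simp add: diff_le_eq)
qed

lemma nonneg_if_sym_triangle:
  fixes D :: "'a \<Rightarrow> 'a \<Rightarrow> real"
  assumes "x \<in> W" and "y \<in> W"
    and sym: "D x y = D y x"
    and tri: "\<And>a b c. a \<in> W \<Longrightarrow> b \<in> W \<Longrightarrow> c \<in> W \<Longrightarrow> D a c \<le> D a b + D b c"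
  shows "0 \<le> D x y"
proof -
  have "D x x \<le> D x x + D x x" and "D x x \<le> D x y + D y x"
    using tri[OF assms(1) assms(1) assms(1)] tri[OF assms(1) assms(2) assms(1)] .
  then show ?thesis
    using sym by linarith
qed

lemma dk_admissible_nonempty:
  fixes d :: "real \<Rightarrow> 'a \<Rightarrow> 'a \<Rightarrow> real"
  assumes "0 < k" and "0 \<le> d 0 x y" and "\<And>e. 0 \<le> e \<Longrightarrow> d e x y \<le> d 0 x y"
  shows "{e. 0 \<le> e \<and> d e x y \<le> k * e} \<noteq> {}"
proof -
  have "d 0 x y / k \<in> {e. 0 \<le> e \<and> d e x y \<le> k * e}"
    using assms by simp
  then show ?thesis
    by blast
qed

lemma dk_le_dk_add:
  fixes d :: "real \<Rightarrow> 'a \<Rightarrow> 'a \<Rightarrow> real"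
  assumes "{e. 0 \<le> e \<and> d e x y \<le> k * e} \<noteq> {}" and "0 \<le> \<delta>"
    and shift: "\<And>e. 0 \<le> e \<Longrightarrow> d e x y \<le> k * e \<Longrightarrow> d (e + \<delta>) x y' \<le> k * (e + \<delta>)"
  shows "dk d k x y' \<le> dk d k x y + \<delta>"
  unfolding dk_def
  by (rule cInf_le_cInf_add) (use assms in \<open>auto intro: bdd_belowI[of _ 0]\<close>)

lemma dk_le_dk_add_if_dist_zero:
  fixes d :: "real \<Rightarrow> 'a \<Rightarrow> 'a \<Rightarrow> real"
  assumes decr: "\<And>x y a b. x \<in> W \<Longrightarrow> y \<in> W \<Longrightarrow> 0 \<le> a \<Longrightarrow> a \<le> b \<Longrightarrow> d b x y \<le> d a x y"
    and sym: "\<And>x y e. x \<in> W \<Longrightarrow> y \<in> W \<Longrightarrow> 0 \<le> e \<Longrightarrow> d e x y = d e y x"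
    and tri: "\<And>x y z e. x \<in> W \<Longrightarrow> y \<in> W \<Longrightarrow> z \<in> W \<Longrightarrow> 0 \<le> e \<Longrightarrow>
                d e x z \<le> d e x y + d e y z"
    and "0 < k" and "0 < \<delta>" and "d \<delta> y y' = 0"
    and xW: "x \<in> W" and yW: "y \<in> W" and y'W: "y' \<in> W"
  shows "dk d k x y' \<le> dk d k x y + \<delta>"
proof (rule dk_le_dk_add)
  have "0 \<le> d 0 x y"
    using nonneg_if_sym_triangle[of x W y "d 0"] xW yW sym tri by simp
  then show "{e. 0 \<le> e \<and> d e x y \<le> k * e} \<noteq> {}"
    using dk_admissible_nonempty[of k d x y] \<open>0 < k\<close> decr[OF xW yW] by simp
next
  fix e :: real
  assume "0 \<le> e" and admissible: "d e x y \<le> k * e"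
  have "d (e + \<delta>) x y' \<le> d (e + \<delta>) x y + d (e + \<delta>) y y'"
    using tri[OF xW yW y'W] \<open>0 \<le> e\<close> \<open>0 < \<delta>\<close> by simp
  also have "\<dots> \<le> d e x y + d \<delta> y y'"
    using decr[OF xW yW, of e "e + \<delta>"] decr[OF yW y'W, of \<delta> "e + \<delta>"] \<open>0 \<le> e\<close> \<open>0 < \<delta>\<close>
    by simp
  also have "\<dots> \<le> k * (e + \<delta>)"
    using admissible \<open>d \<delta> y y' = 0\<close> mult_pos_pos[OF \<open>0 < k\<close> \<open>0 < \<delta>\<close>]
    by (simp add: distrib_left)
  finally show "d (e + \<delta>) x y' \<le> k * (e + \<delta>)" .
qed (use \<open>0 < \<delta>\<close> in simp)

theorem theorem4p10:
  fixes W :: "'a set" and d :: "real \<Rightarrow> 'a \<Rightarrow> 'a \<Rightarrow> real" and k \<delta> :: real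
    and x y y' :: 'a
  assumes rcont: "\<And>x y e. x \<in> W \<Longrightarrow> y \<in> W \<Longrightarrow> 0 \<le> e \<Longrightarrow>
                    continuous (at_right e) (\<lambda>t. d t x y)"
    and decr: "\<And>x y a b. x \<in> W \<Longrightarrow> y \<in> W \<Longrightarrow> 0 \<le> a \<Longrightarrow> a \<le> b \<Longrightarrow> d b x y \<le> d a x y"
    and sym: "\<And>x y e. x \<in> W \<Longrightarrow> y \<in> W \<Longrightarrow> 0 \<le> e \<Longrightarrow> d e x y = d e y x"
    and tri: "\<And>x y z e. x \<in> W \<Longrightarrow> y \<in> W \<Longrightarrow> z \<in> W \<Longrightarrow> 0 \<le> e \<Longrightarrow>
                d e x z \<le> d e x y + d e y z"
    and k: "k > 0"
    and yW: "y \<in> W" and y'W: "y' \<in> W"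
    and \<delta>: "\<delta> > 0" and d\<delta>: "d \<delta> y y' = 0"
    and xW: "x \<in> W"
  shows "\<bar>dk d k x y - dk d k x y'\<bar> \<le> \<delta>"
proof -
  have d\<delta>': "d \<delta> y' y = 0"
    using sym[OF yW y'W] \<delta> d\<delta> by simp
  have "dk d k x y \<le> dk d k x y' + \<delta>"
    using dk_le_dk_add_if_dist_zero[where d = d and W = W, OF decr sym tri k \<delta> d\<delta>' xW y'W yW] .
  moreover have "dk d k x y' \<le> dk d k x y + \<delta>"
    using dk_le_dk_add_if_dist_zero[where d = d and W = W, OF decr sym tri k \<delta> d\<delta> xW yW y'W] .
  ultimately show ?thesis
    by linarith
qed

end
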